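(* The following sequence is exact: $$0\rightarrow H_1(S, \mathbb R)\xrightarrow{f_3} \mathcal K_\tau \xrightarrow{f_2} \widetilde{\mathcal T}_\lambda \xrightarrow{f_1} \mathbb R \rightarrow 0.$$
   Context: Let $S$ be an oriented surface of genus $g$ with $p\geq 1$ punctures and $m=2g-2+p>0$. Let $\tau$ be a decorated ideal triangulation of $S$: an ideal triangulation whose ideal triangles are numbered $\tau_1,\dots,\tau_{2m}$, each with a marked corner. The three sides of each $\tau_\mu$ are numbered $0,1,2$ in counterclockwise order, the $0$-side being opposite the marked corner. Let $\lambda$ be the underlying ideal triangulation (forget the marks), with edges $\lambda_1,\dots,\lambda_{3m}$ and dual edges $\lambda_1^*,\dots,\lambda_{3m}^*$ in the dual graph (whose vertices $\tau_\mu^*$ correspond to the triangles). $\mathcal K_\tau=\mathbb R^{4m}=\{(\ln y_1,\ln z_1,\dots,\ln y_{2m},\ln z_{2m})\}$ is the space of Kashaev coordinates. To such a vector assign to the sides of $\tau_\mu$ the numbers $\ln h_\mu^0=\ln y_\mu-\ln z_\mu$, $\ln h_\mu^1=\ln z_\mu$, $\ln h_\mu^2=-\ln y_\mu$; this identifies $\mathcal K_\tau$ with the subspace of $\mathbb R^{6m}=\{(\dots,\ln h_\mu^0,\ln h_\mu^1,\ln h_\mu^2,\dots)\}$ defined by $\ln h_\mu^0+\ln h_\mu^1+\ln h_\mu^2=0$ for every $\mu$. $\widetilde{\mathcal T}_\lambda=\mathbb R^{3m}=\{(\ln x_1,\dots,\ln x_{3m})\}$ is the enhanced Teichmüller space parametrized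 by shear coordinates, $\ln x_i$ being the shear coordinate at edge $\lambda_i$. The maps are: $f_1(\ln x_1,\dots,\ln x_{3m})=\sum_{i=1}^{3m}\ln x_i$; $f_2$ is the linear map given by $\ln x_i=\ln h_\mu^s+\ln h_\nu^t$ whenever $\lambda_i$ bounds the $s$-side of $\tau_\mu$ and the $t$-side of $\tau_\nu$ ($\mu$ may equal $\nu$); $f_3$ sends a homology class represented by $\sum_{i=1}^{3m}c_i\lambda_i^*$ (oriented dual edges) to the vector obtained by setting $\ln h_\mu^s=-c_i$ and $\ln h_\nu^t=c_i$ whenever $\lambda_i^*$ is oriented from the $s$-side of $\tau_\mu$ to the $t$-side of $\tau_\nu$ (this vector lies in $\mathcal K_\tau$ because the chain is a cycle). *)

theory Defs
  imports Complex_Main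
begin

text \<open>Combinatorial model of a decorated ideal triangulation tau of a punctured
  oriented surface with m = 2g-2+p.  Triangles are numbered 0..<2m, the sides of
  triangle mu are (mu,0),(mu,1),(mu,2) (0-side opposite the marked corner, counterclockwise).
  Edges are numbered 0..<3m; edge i bounds the side e1 i and the side e2 i.
  The dual edge of edge i is oriented from side e1 i to side e2 i.\<close>

type_synonym side = "nat \<times> nat"

text \<open>Vectors in R^n, as real functions on nat vanishing outside {..<n}.\<close>
definition vecs :: "nat \<Rightarrow> (nat \<Rightarrow> real) set" where
  "vecs n = {v. \<forall>i\<ge>n. v i = 0}"

definition sides :: "nat \<Rightarrow> side set" where
  "sides m = {..<2*m} \<times> {..<3}"

definition decorated_triangulation :: "nat \<Rightarrow> (nat \<Rightarrow> side) \<Rightarrow> (nat \<Rightarrow> side) \<Rightarrow> bool" where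
  "decorated_triangulation m e1 e2 \<longleftrightarrow>
     bij_betw (\<lambda>(i,k). if k = (0::nat) then e1 i else e2 i) ({..<3*m} \<times> {..<2}) (sides m)"

definition dual_adj :: "nat \<Rightarrow> (nat \<Rightarrow> side) \<Rightarrow> (nat \<Rightarrow> side) \<Rightarrow> (nat \<times> nat) set" where
  "dual_adj m e1 e2 = {(fst (e1 i), fst (e2 i)) | i. i < 3*m} \<union> {(fst (e2 i), fst (e1 i)) | i. i < 3*m}"

text \<open>The surface is connected, i.e. the dual graph is connected.\<close>
definition dual_connected :: "nat \<Rightarrow> (nat \<Rightarrow> side) \<Rightarrow> (nat \<Rightarrow> side) \<Rightarrow> bool" where
  "dual_connected m e1 e2 \<longleftrightarrow> (\<forall>\<rho> < 2*m. \<forall>\<rho>' < 2*m. (\<rho>, \<rho>') \<in> (dual_adj m e1 e2)\<^sup>*)"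

text \<open>Kashaev coordinates: K_tau = R^{4m}, pairs (ln y, ln z) of vectors in R^{2m}.\<close>
definition Kspace :: "nat \<Rightarrow> ((nat \<Rightarrow> real) \<times> (nat \<Rightarrow> real)) set" where
  "Kspace m = vecs (2*m) \<times> vecs (2*m)"

text \<open>The numbers ln h_mu^s assigned to the sides.\<close>
definition hcoord :: "(nat \<Rightarrow> real) \<times> (nat \<Rightarrow> real) \<Rightarrow> side \<Rightarrow> real" where
  "hcoord K = (\<lambda>(\<mu>, s). if s = 0 then fst K \<mu> - snd K \<mu>
                        else if s = 1 then snd K \<mu> else - fst K \<mu>)"

text \<open>Enhanced Teichmueller space in shear coordinates: R^{3m}.\<close>
definition Tspace :: "nat \<Rightarrow> (nat \<Rightarrow> real) set" where
  "Tspace m = vecs (3*m)"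

definition f1 :: "nat \<Rightarrow> (nat \<Rightarrow> real) \<Rightarrow> real" where
  "f1 m x = (\<Sum>i<3*m. x i)"

definition f2 :: "nat \<Rightarrow> (nat \<Rightarrow> side) \<Rightarrow> (nat \<Rightarrow> side) \<Rightarrow>
    (nat \<Rightarrow> real) \<times> (nat \<Rightarrow> real) \<Rightarrow> nat \<Rightarrow> real" where
  "f2 m e1 e2 K = (\<lambda>i. if i < 3*m then hcoord K (e1 i) + hcoord K (e2 i) else 0)"

text \<open>H_1(S,R): S deformation retracts onto the dual graph (which has no 2-cells),
  so H_1(S,R) is the space of real 1-cycles sum c_i lambda_i^* of the dual graph.\<close>
definition H1 :: "nat \<Rightarrow> (nat \<Rightarrow> side) \<Rightarrow> (nat \<Rightarrow> side) \<Rightarrow> (nat \<Rightarrow> real) set" where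
  "H1 m e1 e2 = {c \<in> vecs (3*m). \<forall>\<rho> < 2*m.
      (\<Sum>i<3*m. (if fst (e2 i) = \<rho> then c i else 0) - (if fst (e1 i) = \<rho> then c i else 0)) = 0}"

text \<open>The vector ln h assigned by f_3: -c_i on the source side, c_i on the target side.\<close>
definition h3 :: "nat \<Rightarrow> (nat \<Rightarrow> side) \<Rightarrow> (nat \<Rightarrow> side) \<Rightarrow> (nat \<Rightarrow> real) \<Rightarrow> side \<Rightarrow> real" where
  "h3 m e1 e2 c \<sigma> = (\<Sum>i<3*m. (if e1 i = \<sigma> then - c i else 0) + (if e2 i = \<sigma> then c i else 0))"

definition f3 :: "nat \<Rightarrow> (nat \<Rightarrow> side) \<Rightarrow> (nat \<Rightarrow> side) \<Rightarrow> (nat \<Rightarrow> real) \<Rightarrow>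
    (nat \<Rightarrow> real) \<times> (nat \<Rightarrow> real)" where
  "f3 m e1 e2 c = ((\<lambda>\<mu>. if \<mu> < 2*m then - h3 m e1 e2 c (\<mu>, 2) else 0),
                   (\<lambda>\<mu>. if \<mu> < 2*m then h3 m e1 e2 c (\<mu>, 1) else 0))"

end

theory Submission
  imports Defs
begin

text \<open>A vector of
  \<open>\<K>\<^sub>\<tau>\<close> is the same as a function on the sides whose three values on every triangle
  sum to zero, and \<open>f\<^sub>3\<close> and \<open>f\<^sub>2\<close> are, in these terms, the maps "spread a 1-chain
  \<open>c\<close> over the sides as \<open>-c\<^sub>i, c\<^sub>i\<close>" and "add up the two sides of every edge".
  The sum of the three values over a triangle of the spread chain is minus its
  boundary at that triangle, so spread chains are balanced exactly when they are
  cycles; this gives exactness at \<open>H\<^sub>1\<close> and at \<open>\<K>\<^sub>\<tau>\<close>. Summing \<open>f\<^sub>2\<close> over all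
  edges sums a balanced function over all sides, which gives \<open>f\<^sub>1 \<circ> f\<^sub>2 = 0\<close>.
  Conversely, given shears \<open>x\<close> with total sum zero, one must split every \<open>x\<^sub>i\<close> as
  \<open>a\<^sub>i + (x\<^sub>i - a\<^sub>i)\<close> over its two sides so that all triangles are balanced: this
  asks that a prescribed function of total sum zero on the vertices of the dual
  graph be the boundary of the 1-chain \<open>a\<close>, which holds since the dual graph is
  connected.\<close>

lemma sum_lessThan_3: "(\<Sum>s<(3::nat). f s) = f 0 + f 1 + (f 2 :: 'a :: comm_monoid_add)"
  by (simp add: numeral_3_eq_3 numeral_2_eq_2 lessThan_Suc add.commute add.left_commute)

lemma less_3_cases: "(s::nat) < 3 \<Longrightarrow> s = 0 \<or> s = 1 \<or> s = 2"
  by arith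

subsection \<open>Kashaev coordinates as balanced functions on the sides\<close>

definition kashaev_of :: "nat \<Rightarrow> (side \<Rightarrow> real) \<Rightarrow> (nat \<Rightarrow> real) \<times> (nat \<Rightarrow> real)" where
  "kashaev_of m h = ((\<lambda>\<mu>. if \<mu> < 2*m then - h (\<mu>, 2) else 0), (\<lambda>\<mu>. if \<mu> < 2*m then h (\<mu>, 1) else 0))"

lemma f3_eq_kashaev_of_h3: "f3 m e1 e2 c = kashaev_of m (h3 m e1 e2 c)"
  by (simp add: f3_def kashaev_of_def)

lemma kashaev_of_in_Kspace: "kashaev_of m h \<in> Kspace m"
  by (simp add: kashaev_of_def Kspace_def vecs_def)

lemma sum_hcoord_triangle: "(\<Sum>s<3. hcoord K (\<mu>, s)) = 0"
  by (simp add: sum_lessThan_3 hcoord_def)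

lemma hcoord_zero: "hcoord ((\<lambda>_. 0), (\<lambda>_. 0)) \<sigma> = 0"
  by (cases \<sigma>) (simp add: hcoord_def)

lemma hcoord_kashaev_of:
  assumes "(\<mu>, s) \<in> sides m" and "(\<Sum>s<3. h (\<mu>, s)) = 0"
  shows "hcoord (kashaev_of m h) (\<mu>, s) = h (\<mu>, s)"
  using assms less_3_cases[of s] by (auto simp: sides_def hcoord_def kashaev_of_def sum_lessThan_3)

lemma kashaev_of_hcoord:
  assumes "K \<in> Kspace m" and "\<And>\<sigma>. \<sigma> \<in> sides m \<Longrightarrow> h \<sigma> = hcoord K \<sigma>"
  shows "kashaev_of m h = K"
proof -
  have "fst (kashaev_of m h) = fst K" "snd (kashaev_of m h) = snd K"
    using assms by (auto simp: kashaev_of_def Kspace_def vecs_def sides_def hcoord_def)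
  then show ?thesis by (simp add: prod_eq_iff)
qed

subsection \<open>Boundaries of 1-chains in the dual graph\<close>

definition dual_incidence :: "(nat \<Rightarrow> side) \<Rightarrow> (nat \<Rightarrow> side) \<Rightarrow> nat \<Rightarrow> nat \<Rightarrow> real" where
  "dual_incidence e1 e2 i \<rho> = of_bool (fst (e1 i) = \<rho>) - of_bool (fst (e2 i) = \<rho>)"

definition dual_boundary :: "nat \<Rightarrow> (nat \<Rightarrow> side) \<Rightarrow> (nat \<Rightarrow> side) \<Rightarrow> (nat \<Rightarrow> real) \<Rightarrow> nat \<Rightarrow> real" where
  "dual_boundary m e1 e2 t \<rho> = (\<Sum>i<3*m. t i * dual_incidence e1 e2 i \<rho>)"

lemma dual_boundary_sum:
  "dual_boundary m e1 e2 (\<lambda>i. \<Sum>\<rho>\<in>A. t \<rho> i) r = (\<Sum>\<rho>\<in>A. dual_boundary m e1 e2 (t \<rho>) r)"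
  unfolding dual_boundary_def sum_distrib_right by (rule sum.swap)

lemma dual_boundary_scale: "dual_boundary m e1 e2 (\<lambda>i. a * t i) r = a * dual_boundary m e1 e2 t r"
  by (simp add: dual_boundary_def sum_distrib_left mult.assoc)

lemma dual_boundary_add:
  "dual_boundary m e1 e2 (\<lambda>i. t i + u i) r = dual_boundary m e1 e2 t r + dual_boundary m e1 e2 u r"
  by (simp add: dual_boundary_def sum.distrib distrib_right)

lemma dual_boundary_unit:
  "i < 3*m \<Longrightarrow> dual_boundary m e1 e2 (\<lambda>j. if j = i then 1 else 0) r = dual_incidence e1 e2 i r"
  by (simp add: dual_boundary_def if_distrib[of "\<lambda>y. y * _"] cong: if_cong)

lemma dual_path_boundary:
  assumes "(a, b) \<in> (dual_adj m e1 e2)\<^sup>*"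
  shows "\<exists>t. \<forall>r. dual_boundary m e1 e2 t r = (if r = a then 1 else 0) - (if r = b then 1 else 0)"
  using assms
proof (induction rule: converse_rtrancl_induct)
  case base
  show ?case by (rule exI[of _ "\<lambda>_. 0"]) (simp add: dual_boundary_def)
next
  case (step y z)
  obtain t where t: "\<And>r. dual_boundary m e1 e2 t r = (if r = z then 1 else 0) - (if r = b then 1 else 0)"
    using step.IH by blast
  obtain i and \<epsilon> :: real where i: "i < 3*m"
    and \<epsilon>: "\<And>r. \<epsilon> * dual_incidence e1 e2 i r = (if r = y then 1 else 0) - (if r = z then 1 else 0)"
  proof -
    obtain i where "i < 3*m" and "(y, z) = (fst (e1 i), fst (e2 i)) \<or> (y, z) = (fst (e2 i), fst (e1 i))"
      using step.hyps(1) unfolding dual_adj_def by blast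
    then show ?thesis
      by (elim disjE) (auto simp: dual_incidence_def intro: that[of i 1] that[of i "-1"])
  qed
  let ?u = "\<lambda>j. t j + \<epsilon> * (if j = i then 1 else 0)"
  have "dual_boundary m e1 e2 ?u r = (if r = y then 1 else 0) - (if r = b then 1 else 0)" for r
    using t[of r] \<epsilon>[of r]
    by (simp add: dual_boundary_add dual_boundary_scale dual_boundary_unit[OF i])
  then show ?case by blast
qed

lemma dual_boundary_surj:
  assumes "m > 0" and "dual_connected m e1 e2" and "(\<Sum>\<rho><2*m. d \<rho>) = 0"
  shows "\<exists>t. \<forall>r<2*m. dual_boundary m e1 e2 t r = d r"
proof -
  have "\<forall>\<rho>\<in>{..<2*m}. \<exists>t. \<forall>r. dual_boundary m e1 e2 t r = (if r = \<rho> then 1 else 0) - (if r = 0 then 1 else 0)"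
    using dual_path_boundary assms(1,2) unfolding dual_connected_def by auto
  then obtain P where P: "\<And>\<rho> r. \<rho> < 2*m \<Longrightarrow>
      dual_boundary m e1 e2 (P \<rho>) r = (if r = \<rho> then 1 else 0) - (if r = 0 then 1 else 0)"
    by (metis bchoice lessThan_iff)
  have "dual_boundary m e1 e2 (\<lambda>i. \<Sum>\<rho><2*m. d \<rho> * P \<rho> i) r = d r" if r: "r < 2*m" for r
  proof -
    have "dual_boundary m e1 e2 (\<lambda>i. \<Sum>\<rho><2*m. d \<rho> * P \<rho> i) r
        = (\<Sum>\<rho><2*m. d \<rho> * dual_boundary m e1 e2 (P \<rho>) r)"
      by (simp add: dual_boundary_sum dual_boundary_scale)
    also have "\<dots> = (\<Sum>\<rho><2*m. (if r = \<rho> then d \<rho> else 0) - d \<rho> * (if r = 0 then 1 else 0))"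
      by (rule sum.cong) (simp_all add: P right_diff_distrib)
    also have "\<dots> = d r - (\<Sum>\<rho><2*m. d \<rho>) * (if r = 0 then 1 else 0)"
      using r by (simp add: sum_subtractf sum_distrib_right)
    finally show ?thesis using assms(3) by simp
  qed
  then show ?thesis by blast
qed

definition glue_sides :: "nat \<Rightarrow> (nat \<Rightarrow> side) \<Rightarrow> (nat \<Rightarrow> side) \<Rightarrow> (nat \<Rightarrow> real) \<Rightarrow> (nat \<Rightarrow> real) \<Rightarrow> side \<Rightarrow> real" where
  "glue_sides m e1 e2 a b \<sigma> = (\<Sum>i<3*m. (if e1 i = \<sigma> then a i else 0) + (if e2 i = \<sigma> then b i else 0))"

lemma h3_eq_glue_sides: "h3 m e1 e2 c = glue_sides m e1 e2 (\<lambda>i. - c i) c"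
  by (simp add: fun_eq_iff h3_def glue_sides_def)

lemma H1_iff_dual_boundary:
  "c \<in> H1 m e1 e2 \<longleftrightarrow> c \<in> vecs (3*m) \<and> (\<forall>\<rho><2*m. dual_boundary m e1 e2 c \<rho> = 0)"
proof -
  have "(\<Sum>i<3*m. (if fst (e2 i) = \<rho> then c i else 0) - (if fst (e1 i) = \<rho> then c i else 0))
      = (\<Sum>i<3*m. - (c i * dual_incidence e1 e2 i \<rho>))" for \<rho>
    by (rule sum.cong) (auto simp: dual_incidence_def)
  then show ?thesis by (simp add: H1_def dual_boundary_def sum_negf)
qed

context
  fixes m :: nat and e1 e2 :: "nat \<Rightarrow> side"
  assumes triangulation: "decorated_triangulation m e1 e2"
begin

lemma edge_slots_bij: "bij_betw (\<lambda>(i,k). if k = (0::nat) then e1 i else e2 i) ({..<3*m} \<times> {..<2}) (sides m)"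
  using triangulation unfolding decorated_triangulation_def .

lemma
  assumes "i < 3*m"
  shows e1_in_sides: "e1 i \<in> sides m" and e2_in_sides: "e2 i \<in> sides m"
  using bij_betw_apply[OF edge_slots_bij, of "(i,0)"] bij_betw_apply[OF edge_slots_bij, of "(i,1)"] assms
  by auto

lemma
  assumes "i < 3*m" and "j < 3*m"
  shows e1_eq_iff: "e1 i = e1 j \<longleftrightarrow> i = j" and e2_eq_iff: "e2 i = e2 j \<longleftrightarrow> i = j"
    and e1_neq_e2: "e1 i \<noteq> e2 j"
  using inj_onD[OF bij_betw_imp_inj_on[OF edge_slots_bij], of "(i,0)" "(j,0)"]
    inj_onD[OF bij_betw_imp_inj_on[OF edge_slots_bij], of "(i,1)" "(j,1)"]
    inj_onD[OF bij_betw_imp_inj_on[OF edge_slots_bij], of "(i,0)" "(j,1)"] assms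
  by auto

lemma side_cases:
  assumes "\<sigma> \<in> sides m"
  obtains i where "i < 3*m" and "\<sigma> = e1 i \<or> \<sigma> = e2 i"
  using bij_betw_imp_surj_on[OF edge_slots_bij] assms by (force split: if_splits)

lemma sum_sides_eq_sum_edges: "(\<Sum>\<sigma>\<in>sides m. g \<sigma>) = (\<Sum>i<3*m. g (e1 i) + g (e2 i))"
proof -
  have "(\<Sum>\<sigma>\<in>sides m. g \<sigma>) = (\<Sum>(i,k)\<in>{..<3*m} \<times> {..<2}. g (if k = (0::nat) then e1 i else e2 i))"
    using sum.reindex_bij_betw[OF edge_slots_bij, of g] by (simp add: case_prod_unfold)
  also have "\<dots> = (\<Sum>i<3*m. g (e1 i) + g (e2 i))"
    by (simp add: sum.cartesian_product[symmetric] numeral_2_eq_2 lessThan_Suc add.commute)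
  finally show ?thesis .
qed

lemma
  assumes "j < 3*m"
  shows glue_sides_e1: "glue_sides m e1 e2 a b (e1 j) = a j"
    and glue_sides_e2: "glue_sides m e1 e2 a b (e2 j) = b j"
proof -
  have "glue_sides m e1 e2 a b (e1 j) = (\<Sum>i<3*m. if i = j then a j else 0)"
    "glue_sides m e1 e2 a b (e2 j) = (\<Sum>i<3*m. if i = j then b j else 0)"
    unfolding glue_sides_def using assms by (auto simp: e1_eq_iff e2_eq_iff e1_neq_e2 e1_neq_e2[symmetric] intro!: sum.cong)
  then show "glue_sides m e1 e2 a b (e1 j) = a j" "glue_sides m e1 e2 a b (e2 j) = b j"
    using assms by simp_all
qed

lemma sum_glue_sides_triangle:
  "(\<Sum>s<3. glue_sides m e1 e2 a b (\<rho>, s))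
     = (\<Sum>i<3*m. (if fst (e1 i) = \<rho> then a i else 0) + (if fst (e2 i) = \<rho> then b i else 0))"
proof -
  have "(\<Sum>s<3. glue_sides m e1 e2 a b (\<rho>, s))
      = (\<Sum>i<3*m. \<Sum>s<3. (if e1 i = (\<rho>, s) then a i else 0) + (if e2 i = (\<rho>, s) then b i else 0))"
    unfolding glue_sides_def by (rule sum.swap)
  also have "\<dots> = (\<Sum>i<3*m. (if fst (e1 i) = \<rho> then a i else 0) + (if fst (e2 i) = \<rho> then b i else 0))"
  proof (rule sum.cong[OF refl])
    fix i assume "i \<in> {..<3*m}"
    then have "e1 i \<in> sides m" "e2 i \<in> sides m" by (simp_all add: e1_in_sides e2_in_sides)
    then show "(\<Sum>s<3. (if e1 i = (\<rho>, s) then a i else 0) + (if e2 i = (\<rho>, s) then b i else 0))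
      = (if fst (e1 i) = \<rho> then a i else 0) + (if fst (e2 i) = \<rho> then b i else 0)"
      by (cases "e1 i", cases "e2 i") (auto simp: sides_def sum.distrib)
  qed
  finally show ?thesis .
qed

lemma sum_h3_triangle: "(\<Sum>s<3. h3 m e1 e2 c (\<rho>, s)) = - dual_boundary m e1 e2 c \<rho>"
proof -
  have "(\<Sum>s<3. h3 m e1 e2 c (\<rho>, s)) = (\<Sum>i<3*m. - (c i * dual_incidence e1 e2 i \<rho>))"
    unfolding h3_eq_glue_sides sum_glue_sides_triangle by (rule sum.cong) (auto simp: dual_incidence_def)
  then show ?thesis by (simp add: dual_boundary_def sum_negf)
qed

lemma hcoord_f3:
  assumes "c \<in> H1 m e1 e2" and "\<sigma> \<in> sides m"
  shows "hcoord (f3 m e1 e2 c) \<sigma> = h3 m e1 e2 c \<sigma>"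
proof -
  obtain \<mu> s where \<sigma>: "\<sigma> = (\<mu>, s)" and \<mu>: "\<mu> < 2*m"
    using assms(2) by (auto simp: sides_def)
  have "(\<Sum>s<3. h3 m e1 e2 c (\<mu>, s)) = 0"
    using assms(1) \<mu> by (simp add: sum_h3_triangle H1_iff_dual_boundary)
  then show ?thesis
    unfolding f3_eq_kashaev_of_h3 \<sigma> using assms(2) \<sigma> by (intro hcoord_kashaev_of) simp_all
qed

lemma ker_f3_trivial:
  assumes "c \<in> H1 m e1 e2" and "f3 m e1 e2 c = ((\<lambda>_. 0), (\<lambda>_. 0))"
  shows "c = (\<lambda>_. 0)"
proof
  fix j
  show "c j = 0"
  proof (cases "j < 3*m")
    case True
    have "- c j = h3 m e1 e2 c (e1 j)"
      by (simp add: h3_eq_glue_sides glue_sides_e1[OF True])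
    also have "\<dots> = hcoord ((\<lambda>_. 0), (\<lambda>_. 0)) (e1 j)"
      using hcoord_f3[OF assms(1) e1_in_sides[OF True]] assms(2) by simp
    finally show ?thesis by (simp add: hcoord_zero)
  next
    case False
    then show ?thesis using assms(1) by (simp add: H1_def vecs_def)
  qed
qed

lemma f2_f3_eq_0:
  assumes "c \<in> H1 m e1 e2"
  shows "f2 m e1 e2 (f3 m e1 e2 c) = (\<lambda>_. 0)"
proof
  fix i
  show "f2 m e1 e2 (f3 m e1 e2 c) i = 0"
    using hcoord_f3[OF assms e1_in_sides] hcoord_f3[OF assms e2_in_sides]
    by (simp add: f2_def h3_eq_glue_sides glue_sides_e1 glue_sides_e2)
qed

lemma ker_f2_subset_range_f3:
  assumes K: "K \<in> Kspace m" and f2_K: "f2 m e1 e2 K = (\<lambda>_. 0)"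
  shows "K \<in> f3 m e1 e2 ` H1 m e1 e2"
proof -
  define c where "c = (\<lambda>i. if i < 3*m then hcoord K (e2 i) else 0)"
  have hcoord_e1: "hcoord K (e1 j) = - c j" if "j < 3*m" for j
    using fun_cong[OF f2_K, of j] that by (simp add: f2_def c_def eq_neg_iff_add_eq_0)
  have h3_c: "h3 m e1 e2 c \<sigma> = hcoord K \<sigma>" if \<sigma>: "\<sigma> \<in> sides m" for \<sigma>
  proof -
    obtain i where "i < 3*m" and "\<sigma> = e1 i \<or> \<sigma> = e2 i"
      using side_cases[OF \<sigma>] by blast
    then show ?thesis
      using hcoord_e1 by (auto simp: h3_eq_glue_sides glue_sides_e1 glue_sides_e2 c_def)
  qed
  have "dual_boundary m e1 e2 c \<rho> = 0" if "\<rho> < 2*m" for \<rho>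
    using sum_h3_triangle[of c \<rho>] sum_hcoord_triangle[of K \<rho>] h3_c that
    by (simp add: sides_def)
  then have "c \<in> H1 m e1 e2"
    by (simp add: H1_iff_dual_boundary c_def vecs_def)
  moreover have "f3 m e1 e2 c = K"
    unfolding f3_eq_kashaev_of_h3 using K h3_c by (rule kashaev_of_hcoord)
  ultimately show ?thesis by blast
qed

lemma f1_f2_eq_0: "f1 m (f2 m e1 e2 K) = 0"
proof -
  have "f1 m (f2 m e1 e2 K) = (\<Sum>i<3*m. hcoord K (e1 i) + hcoord K (e2 i))"
    by (simp add: f1_def f2_def)
  also have "\<dots> = (\<Sum>\<sigma>\<in>sides m. hcoord K \<sigma>)"
    by (simp add: sum_sides_eq_sum_edges)
  also have "\<dots> = (\<Sum>\<mu><2*m. \<Sum>s<3. hcoord K (\<mu>, s))"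
    by (simp add: sides_def sum.cartesian_product)
  finally show ?thesis by (simp add: sum_hcoord_triangle)
qed

lemma ker_f1_subset_range_f2:
  assumes "m > 0" and "dual_connected m e1 e2" and x: "x \<in> Tspace m" and "f1 m x = 0"
  shows "x \<in> f2 m e1 e2 ` Kspace m"
proof -
  define w where "w \<rho> = (\<Sum>i<3*m. if fst (e2 i) = \<rho> then x i else 0)" for \<rho>
  have "(\<Sum>\<rho><2*m. w \<rho>) = (\<Sum>i<3*m. \<Sum>\<rho><2*m. if fst (e2 i) = \<rho> then x i else 0)"
    unfolding w_def by (rule sum.swap)
  also have "\<dots> = f1 m x"
    unfolding f1_def by (intro sum.cong) (auto simp: sides_def dest!: e2_in_sides)
  finally have "(\<Sum>\<rho><2*m. - w \<rho>) = 0"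
    using assms(4) by (simp add: sum_negf)
  then obtain a where a: "\<And>\<rho>. \<rho> < 2*m \<Longrightarrow> dual_boundary m e1 e2 a \<rho> = - w \<rho>"
    using dual_boundary_surj[OF assms(1,2)] by blast
  define h where "h = glue_sides m e1 e2 a (\<lambda>i. x i - a i)"
  have "(\<Sum>s<3. h (\<rho>, s)) = dual_boundary m e1 e2 a \<rho> + w \<rho>" for \<rho>
  proof -
    have "(\<Sum>s<3. h (\<rho>, s)) = (\<Sum>i<3*m. a i * dual_incidence e1 e2 i \<rho> + (if fst (e2 i) = \<rho> then x i else 0))"
      unfolding h_def sum_glue_sides_triangle by (rule sum.cong) (auto simp: dual_incidence_def)
    then show ?thesis by (simp add: sum.distrib dual_boundary_def w_def)
  qed
  then have balanced: "(\<Sum>s<3. h (\<rho>, s)) = 0" if "\<rho> < 2*m" for \<rho>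
    using a that by simp
  have "f2 m e1 e2 (kashaev_of m h) = x"
  proof
    fix i
    show "f2 m e1 e2 (kashaev_of m h) i = x i"
    proof (cases "i < 3*m")
      case True
      have "hcoord (kashaev_of m h) \<sigma> = h \<sigma>" if "\<sigma> \<in> sides m" for \<sigma>
        using that balanced by (cases \<sigma>) (auto simp: sides_def intro: hcoord_kashaev_of)
      then show ?thesis
        using True e1_in_sides[OF True] e2_in_sides[OF True]
        by (simp add: f2_def h_def glue_sides_e1 glue_sides_e2)
    next
      case False
      then show ?thesis using x by (simp add: f2_def Tspace_def vecs_def)
    qed
  qed
  then show ?thesis using kashaev_of_in_Kspace by blast
qed

end

theorem theorem4p1:
  fixes m :: nat and e1 e2 :: "nat \<Rightarrow> side"
  assumes "m > 0"
    and "decorated_triangulation m e1 e2"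
    and "dual_connected m e1 e2"
  shows "{c \<in> H1 m e1 e2. f3 m e1 e2 c = ((\<lambda>_. 0), (\<lambda>_. 0))} = {\<lambda>_. 0}
       \<and> f3 m e1 e2 ` H1 m e1 e2 \<subseteq> Kspace m
       \<and> f3 m e1 e2 ` H1 m e1 e2 = {K \<in> Kspace m. f2 m e1 e2 K = (\<lambda>_. 0)}
       \<and> f2 m e1 e2 ` Kspace m \<subseteq> Tspace m
       \<and> f2 m e1 e2 ` Kspace m = {x \<in> Tspace m. f1 m x = 0}
       \<and> f1 m ` Tspace m = UNIV"
proof (intro conjI)
  have "(\<lambda>_. 0) \<in> H1 m e1 e2" and "f3 m e1 e2 (\<lambda>_. 0) = ((\<lambda>_. 0), (\<lambda>_. 0))"
    by (simp_all add: H1_def vecs_def f3_def h3_def fun_eq_iff sum.neutral)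
  then show "{c \<in> H1 m e1 e2. f3 m e1 e2 c = ((\<lambda>_. 0), (\<lambda>_. 0))} = {\<lambda>_. 0}"
    using ker_f3_trivial[OF assms(2)] by blast
  show f3_range: "f3 m e1 e2 ` H1 m e1 e2 \<subseteq> Kspace m"
    by (auto simp: f3_eq_kashaev_of_h3 kashaev_of_in_Kspace)
  show "f3 m e1 e2 ` H1 m e1 e2 = {K \<in> Kspace m. f2 m e1 e2 K = (\<lambda>_. 0)}"
    using f3_range f2_f3_eq_0[OF assms(2)] ker_f2_subset_range_f3[OF assms(2)] by blast
  show f2_range: "f2 m e1 e2 ` Kspace m \<subseteq> Tspace m"
    by (auto simp: f2_def Tspace_def vecs_def)
  show "f2 m e1 e2 ` Kspace m = {x \<in> Tspace m. f1 m x = 0}"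
    using f2_range f1_f2_eq_0[OF assms(2)] ker_f1_subset_range_f2[OF assms(2,1,3)] by blast
  have "f1 m (\<lambda>i. if i = 0 then r else 0) = r" and "(\<lambda>i. if i = 0 then r else 0) \<in> Tspace m" for r
    using assms(1) by (simp_all add: f1_def Tspace_def vecs_def)
  then show "f1 m ` Tspace m = UNIV"
    by (metis UNIV_eq_I image_eqI)
qed

end
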